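(* Assume the three-space setting of the context. There exist $\epsilon_0>0$, $D'>0$ and $\lambda'>0$ such that for all $\epsilon\in I$ with $|\epsilon|\le\epsilon_0$, all $\omega\in\Omega'$ and all $n\in\mathbb N$: \[ \|\mathcal L^n_{\omega,\epsilon}h\|_{ss}\le D'e^{-\lambda' n}\|h\|_{ss}\ \ \text{for }h\in\mathcal B_{ss}^0,\qquad \|\mathcal L^n_{\omega,\epsilon}h\|_{s}\le D'e^{-\lambda' n}\|h\|_{s}\ \ \text{for }h\in\mathcal B_{s}^0. \]
   Context: $(\Omega,\mathcal F,\mathbb P)$ is a probability space, $\sigma$ an invertible measurable $\mathbb P$-preserving ergodic map. $\mathcal B_{ss}\subset\mathcal B_s\subset\mathcal B_w$ are Banach spaces with norms $\|\cdot\|_w\le\|\cdot\|_s$ on $\mathcal B_s$ and $\|\cdot\|_s\le\|\cdot\|_{ss}$ on $\mathcal B_{ss}$. $\psi$ is a nonzero bounded linear functional on $\mathcal B_s$ with a bounded extension to $\mathcal B_w$ (and restriction to $\mathcal B_{ss}$); $\mathcal B_{x}^0:=\{h\in\mathcal B_x:\psi(h)=0\}$ for $x\in\{ss,s,w\}$. $I\ni0$ is an interval; for $\epsilon\in I$, $\omega\in\Omega$, $\mathcal L_{\omega,\epsilon}$ is a bounded operator on each of the three spaces, and $\omega\mapsto\mathcal L_{\omega,\epsilon}h$ is measurable for each $h\in\mathcal B_s$ (resp. $h\in\mathcal B_{ss}$) and each $\epsilon$. $\mathcal L_\omega:=\mathcal L_{\omega,0}$, $\mathcal L^n_{\omega,\epsilon}:=\mathcal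 L_{\sigma^{n-1}\omega,\epsilon}\circ\cdots\circ\mathcal L_{\omega,\epsilon}$. There are $C,D,\lambda>0$, $\lambda_1\in(0,1)$ and a measurable $\sigma$-invariant $\Omega'\subset\Omega$, $\mathbb P(\Omega')=1$, such that for all $\epsilon\in I$, $\omega\in\Omega'$, $n\in\mathbb N$: $\|\mathcal L^n_\omega h\|_s\le De^{-\lambda n}\|h\|_s$ ($h\in\mathcal B_s^0$); $\|\mathcal L^n_\omega h\|_{ss}\le De^{-\lambda n}\|h\|_{ss}$ ($h\in\mathcal B_{ss}^0$); $\|\mathcal L^n_{\omega,\epsilon}h\|_s\le C\lambda_1^n\|h\|_s+C\|h\|_w$ ($h\in\mathcal B_s$); $\|\mathcal L^n_{\omega,\epsilon}h\|_{ss}\le C\lambda_1^n\|h\|_{ss}+C\|h\|_s$ ($h\in\mathcal B_{ss}$); $\|(\mathcal L_{\omega,\epsilon}-\mathcal L_\omega)h\|_w\le C|\epsilon|\|h\|_s$ ($h\in\mathcal B_s$); $\|(\mathcal L_{\omega,\epsilon}-\mathcal L_\omega)h\|_s\le C|\epsilon|\|h\|_{ss}$ ($h\in\mathcal B_{ss}$); $\|\mathcal L^n_{\omega,\epsilon}\|_{\mathcal B_w\to\mathcal B_w}\le C$; $\psi(\mathcal L_{\omega,\epsilon}h)=\psi(h)$ ($h\in\mathcal B_s$). *)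

theory Defs
  imports "HOL-Probability.Probability"
begin

fun cocycle :: "('o \<Rightarrow> 'o) \<Rightarrow> ('o \<Rightarrow> 'a \<Rightarrow> 'a) \<Rightarrow> nat \<Rightarrow> 'o \<Rightarrow> 'a \<Rightarrow> 'a" where
  "cocycle \<sigma> L 0 \<omega> = id"
| "cocycle \<sigma> L (Suc n) \<omega> = cocycle \<sigma> L n (\<sigma> \<omega>) \<circ> L \<omega>"

definition invertible_mp_ergodic :: "'o measure \<Rightarrow> ('o \<Rightarrow> 'o) \<Rightarrow> bool" where
  "invertible_mp_ergodic M \<sigma> \<longleftrightarrow>
     \<sigma> \<in> measurable M M \<and>
     bij_betw \<sigma> (space M) (space M) \<and>
     inv_into (space M) \<sigma> \<in> measurable M M \<and>
     distr M M \<sigma> = M \<and>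
     (\<forall>A\<in>sets M. \<sigma> -` A \<inter> space M = A \<longrightarrow> measure M A = 0 \<or> measure M A = 1)"

end

theory Submission
  imports Defs
begin

text \<open>
  Let A be the perturbed cocycle on the strong space, B the unperturbed one and j the inclusion
  into the weak space. Telescoping bounds the weak norm of j (A^n x) - j (B^n x) by a multiple of
  |eps| * sum_{i<n} ||B^i x||, hence by O(|eps| n) ||x|| on the kernel of psi. Feeding this into the
  Lasota-Yorke inequality for a second block of N steps gives
  ||A^(2N) x|| <= (2 C^2 lam1^N + C D e^(-lam N) + O(|eps| N)) ||x||,
  which is at most ||x|| / 2 once N is fixed large and then eps small. As psi is preserved,
  iterating this halving gives exponential decay uniformly in eps. For B_ss the weak space is B_s,
  on which the perturbed cocycle is bounded by its Lasota-Yorke inequality.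
\<close>

lemma funpow_in_invariant:
  assumes "\<sigma> ` S \<subseteq> S" "\<omega> \<in> S"
  shows "(\<sigma> ^^ m) \<omega> \<in> S"
  using assms by (induction m) auto

lemma cocycle_add:
  "cocycle \<sigma> A (m + n) \<omega> = cocycle \<sigma> A n ((\<sigma> ^^ m) \<omega>) \<circ> cocycle \<sigma> A m \<omega>"
  by (induction m arbitrary: \<omega>) (auto simp: funpow_swap1)

lemma cocycle_preserves:
  assumes "\<sigma> ` S \<subseteq> S" "\<And>\<omega> x. \<omega> \<in> S \<Longrightarrow> P x \<Longrightarrow> P (A \<omega> x)"
    and "\<omega> \<in> S" "P x"
  shows "P (cocycle \<sigma> A n \<omega> x)"
  using assms(3,4) by (induction n arbitrary: \<omega> x) (use assms(1) in \<open>auto simp: assms(2)\<close>)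

lemma cocycle_intertwines:
  assumes "\<sigma> ` S \<subseteq> S" "\<And>\<omega> x. \<omega> \<in> S \<Longrightarrow> j (A \<omega> x) = A' \<omega> (j x)"
    and "\<omega> \<in> S"
  shows "j (cocycle \<sigma> A n \<omega> x) = cocycle \<sigma> A' n \<omega> (j x)"
  using assms(3) by (induction n arbitrary: \<omega> x) (use assms(1) in \<open>auto simp: assms(2)\<close>)

lemma linear_cocycle:
  assumes "\<sigma> ` S \<subseteq> S" "\<And>\<omega>. \<omega> \<in> S \<Longrightarrow> linear (A \<omega>)" "\<omega> \<in> S"
  shows "linear (cocycle \<sigma> A n \<omega>)"
  using assms(3) by (induction n arbitrary: \<omega>)
    (use assms(1) in \<open>auto intro!: linear_compose simp: assms(2) id_def linear_ident\<close>)

lemma cocycle_perturbation_bound: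
  fixes A B :: "'o \<Rightarrow> 'a::real_normed_vector \<Rightarrow> 'a" and A' :: "'o \<Rightarrow> 'b::real_normed_vector \<Rightarrow> 'b"
  assumes maps_to: "\<sigma> ` S \<subseteq> S"
    and linear_A: "\<And>\<omega>. \<omega> \<in> S \<Longrightarrow> linear (A \<omega>)"
    and "linear j"
    and intertwines: "\<And>\<omega> x. \<omega> \<in> S \<Longrightarrow> j (A \<omega> x) = A' \<omega> (j x)"
    and A'_bounded: "\<And>\<omega> n y. \<omega> \<in> S \<Longrightarrow> norm (cocycle \<sigma> A' n \<omega> y) \<le> K1 * norm y"
    and close: "\<And>\<omega> x. \<omega> \<in> S \<Longrightarrow> norm (j (A \<omega> x) - j (B \<omega> x)) \<le> K2 * norm x"
    and "K1 \<ge> 0" "\<omega> \<in> S"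
  shows "norm (j (cocycle \<sigma> A n \<omega> x) - j (cocycle \<sigma> B n \<omega> x))
           \<le> K1 * K2 * (\<Sum>i<n. norm (cocycle \<sigma> B i \<omega> x))"
  using \<open>\<omega> \<in> S\<close>
proof (induction n arbitrary: \<omega> x)
  case 0
  then show ?case by simp
next
  case (Suc n)
  let ?A = "cocycle \<sigma> A n (\<sigma> \<omega>)" and ?B = "cocycle \<sigma> B n (\<sigma> \<omega>)"
  have "\<sigma> \<omega> \<in> S" using Suc.prems maps_to by blast
  then have "linear (j \<circ> ?A)"
    using linear_cocycle[where \<sigma> = \<sigma> and A = A, OF maps_to linear_A \<open>\<sigma> \<omega> \<in> S\<close>] \<open>linear j\<close>
    by (blast intro: linear_compose)
  then have "j (?A (A \<omega> x - B \<omega> x)) = j (?A (A \<omega> x)) - j (?A (B \<omega> x))"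
    using linear_diff by fastforce
  then have split: "j (cocycle \<sigma> A (Suc n) \<omega> x) - j (cocycle \<sigma> B (Suc n) \<omega> x)
      = j (?A (A \<omega> x - B \<omega> x)) + (j (?A (B \<omega> x)) - j (?B (B \<omega> x)))"
    by simp
  have "norm (j (?A (A \<omega> x - B \<omega> x))) = norm (cocycle \<sigma> A' n (\<sigma> \<omega>) (j (A \<omega> x - B \<omega> x)))"
    using cocycle_intertwines[where S = S and \<sigma> = \<sigma> and A = A and j = j,
        OF maps_to intertwines \<open>\<sigma> \<omega> \<in> S\<close>]
    by simp
  also have "\<dots> \<le> K1 * norm (j (A \<omega> x) - j (B \<omega> x))"
    using A'_bounded[OF \<open>\<sigma> \<omega> \<in> S\<close>] \<open>linear j\<close> by (simp add: linear_diff)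
  also have "\<dots> \<le> K1 * (K2 * norm x)"
    using close[OF Suc.prems] \<open>K1 \<ge> 0\<close> by (rule mult_left_mono)
  finally have first: "norm (j (?A (A \<omega> x - B \<omega> x))) \<le> K1 * K2 * norm x"
    by (simp add: mult.assoc)
  have shift: "(\<Sum>i<Suc n. norm (cocycle \<sigma> B i \<omega> x))
      = norm x + (\<Sum>i<n. norm (cocycle \<sigma> B i (\<sigma> \<omega>) (B \<omega> x)))"
    by (subst sum.lessThan_Suc_shift) simp
  have "norm (j (cocycle \<sigma> A (Suc n) \<omega> x) - j (cocycle \<sigma> B (Suc n) \<omega> x))
      \<le> norm (j (?A (A \<omega> x - B \<omega> x))) + norm (j (?A (B \<omega> x)) - j (?B (B \<omega> x)))"
    unfolding split by (rule norm_triangle_ineq)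
  also have "\<dots> \<le> K1 * K2 * norm x + K1 * K2 * (\<Sum>i<n. norm (cocycle \<sigma> B i (\<sigma> \<omega>) (B \<omega> x)))"
    using first Suc.IH[OF \<open>\<sigma> \<omega> \<in> S\<close>] by (rule add_mono)
  also have "\<dots> = K1 * K2 * (\<Sum>i<Suc n. norm (cocycle \<sigma> B i \<omega> x))"
    unfolding shift by (simp add: distrib_left)
  finally show ?case .
qed

lemma half_power_div_le_exp:
  assumes "T > 0"
  shows "(1/2::real) ^ (n div T) \<le> 2 * exp (- (ln 2 / T) * n)"
proof -
  define k where "k = n div T"
  have "n = T * k + n mod T"
    by (simp add: k_def)
  moreover have "n mod T < T"
    using assms by simp
  ultimately have "n < T * k + T"
    by linarith
  then have n_less: "real n < real T * (real k + 1)"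
    by (simp add: distrib_left flip: of_nat_mult of_nat_add)
  have "ln 2 / T * n < ln 2 / T * (real T * (real k + 1))"
    by (rule mult_strict_left_mono[OF n_less]) (use assms in simp)
  also have "\<dots> = ln 2 * (k + 1)"
    using assms by simp
  finally have "ln 2 / T * n < ln 2 * (k + 1)" .
  have "(1/2::real) ^ k = exp (- (k * ln 2))"
    by (simp add: exp_minus exp_of_nat_mult power_one_over inverse_eq_divide)
  also have "\<dots> \<le> exp (- (ln 2 / T) * n + ln 2)"
    using \<open>ln 2 / T * n < ln 2 * (k + 1)\<close> by (simp add: algebra_simps)
  also have "\<dots> = 2 * exp (- (ln 2 / T) * n)"
    by (subst exp_add) simp
  finally show ?thesis
    unfolding k_def .
qed

lemma cocycle_exp_decay_of_halving:
  fixes A :: "'o \<Rightarrow> 'a::real_normed_vector \<Rightarrow> 'a"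
  assumes maps_to: "\<sigma> ` S \<subseteq> S"
    and P_invariant: "\<And>\<omega> x. \<omega> \<in> S \<Longrightarrow> P x \<Longrightarrow> P (A \<omega> x)"
    and bounded: "\<And>\<omega> n x. \<omega> \<in> S \<Longrightarrow> norm (cocycle \<sigma> A n \<omega> x) \<le> M * norm x"
    and halving: "\<And>\<omega> x. \<omega> \<in> S \<Longrightarrow> P x \<Longrightarrow> norm (cocycle \<sigma> A T \<omega> x) \<le> norm x / 2"
    and "T > 0" "M \<ge> 0" "\<omega> \<in> S" "P x"
  shows "norm (cocycle \<sigma> A n \<omega> x) \<le> 2 * M * exp (- (ln 2 / T) * n) * norm x"
proof -
  have iterate: "norm (cocycle \<sigma> A (T * k) \<omega> x) \<le> (1/2) ^ k * norm x"
    if "\<omega> \<in> S" "P x" for k \<omega> x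
    using that
  proof (induction k arbitrary: \<omega> x)
    case 0
    then show ?case by simp
  next
    case (Suc k)
    let ?y = "cocycle \<sigma> A T \<omega> x"
    have "cocycle \<sigma> A (T * Suc k) \<omega> x = cocycle \<sigma> A (T * k) ((\<sigma> ^^ T) \<omega>) ?y"
      using cocycle_add[of \<sigma> A T "T * k" \<omega>] by simp
    moreover have "(\<sigma> ^^ T) \<omega> \<in> S"
      using maps_to Suc.prems(1) by (rule funpow_in_invariant)
    moreover have "P ?y"
      using maps_to P_invariant Suc.prems by (rule cocycle_preserves)
    ultimately have "norm (cocycle \<sigma> A (T * Suc k) \<omega> x) \<le> (1/2) ^ k * norm ?y"
      using Suc.IH by simp
    also have "\<dots> \<le> (1/2) ^ k * (norm x / 2)"
      using halving[OF Suc.prems] by (simp add: mult_left_mono)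
    finally show ?case by simp
  qed
  define k where "k = n div T"
  have "cocycle \<sigma> A n \<omega> x = cocycle \<sigma> A (n mod T) ((\<sigma> ^^ (T * k)) \<omega>) (cocycle \<sigma> A (T * k) \<omega> x)"
    using cocycle_add[of \<sigma> A "T * k" "n mod T" \<omega>] by (simp add: k_def)
  then have "norm (cocycle \<sigma> A n \<omega> x) \<le> M * norm (cocycle \<sigma> A (T * k) \<omega> x)"
    using bounded funpow_in_invariant[OF maps_to \<open>\<omega> \<in> S\<close>] by simp
  also have "\<dots> \<le> M * ((1/2) ^ k * norm x)"
    using iterate[OF \<open>\<omega> \<in> S\<close> \<open>P x\<close>] \<open>M \<ge> 0\<close> by (rule mult_left_mono)
  also have "\<dots> \<le> M * (2 * exp (- (ln 2 / T) * n) * norm x)"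
    using half_power_div_le_exp[OF \<open>T > 0\<close>, of n] \<open>M \<ge> 0\<close>
    by (intro mult_left_mono mult_right_mono) (simp_all add: k_def)
  finally show ?thesis
    by (simp add: mult.assoc)
qed

lemma eventually_geometric_plus_exp_less:
  fixes q lam e a b :: real
  assumes "0 \<le> q" "q < 1" "lam > 0" "e > 0"
  shows "\<forall>\<^sub>F N in sequentially. a * q ^ N + b * exp (- lam * N) < e"
proof -
  have "exp (- lam * N) = exp (- lam) ^ N" for N :: nat
    by (metis exp_of_nat_mult mult.commute)
  moreover have "(\<lambda>N. a * q ^ N + b * exp (- lam) ^ N) \<longlonglongrightarrow> a * 0 + b * 0"
    using assms by (intro tendsto_intros LIMSEQ_power_zero) auto
  ultimately have "(\<lambda>N. a * q ^ N + b * exp (- lam * N)) \<longlonglongrightarrow> 0"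
    by simp
  then show ?thesis
    using \<open>e > 0\<close> by (rule order_tendstoD)
qed

text \<open>P describes the invariant subspace on which B decays (the kernel of psi).\<close>

locale perturbed_cocycle =
  fixes \<sigma> :: "'o \<Rightarrow> 'o" and S :: "'o set"
    and P :: "'a::real_normed_vector \<Rightarrow> bool"
    and j :: "'a \<Rightarrow> 'b::real_normed_vector"
    and A B :: "'o \<Rightarrow> 'a \<Rightarrow> 'a" and A' :: "'o \<Rightarrow> 'b \<Rightarrow> 'b"
    and C D lam lam1 K1 K2 :: real
  assumes maps_to: "\<sigma> ` S \<subseteq> S"
    and linear_A: "\<And>\<omega>. \<omega> \<in> S \<Longrightarrow> linear (A \<omega>)"
    and linear_j: "linear j"
    and norm_j_le: "\<And>x. norm (j x) \<le> norm x"
    and intertwines: "\<And>\<omega> x. \<omega> \<in> S \<Longrightarrow> j (A \<omega> x) = A' \<omega> (j x)"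
    and A'_bounded: "\<And>\<omega> n y. \<omega> \<in> S \<Longrightarrow> norm (cocycle \<sigma> A' n \<omega> y) \<le> K1 * norm y"
    and close: "\<And>\<omega> x. \<omega> \<in> S \<Longrightarrow> norm (j (A \<omega> x) - j (B \<omega> x)) \<le> K2 * norm x"
    and P_invariant: "\<And>\<omega> x. \<omega> \<in> S \<Longrightarrow> P x \<Longrightarrow> P (A \<omega> x)"
    and lasota_yorke: "\<And>\<omega> n x. \<omega> \<in> S \<Longrightarrow>
      norm (cocycle \<sigma> A n \<omega> x) \<le> C * lam1 ^ n * norm x + C * norm (j x)"
    and B_decay: "\<And>\<omega> n x. \<omega> \<in> S \<Longrightarrow> P x \<Longrightarrow>
      norm (cocycle \<sigma> B n \<omega> x) \<le> D * exp (- lam * n) * norm x"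
    and nonneg: "0 \<le> C" "0 \<le> D" "0 \<le> lam" "0 \<le> lam1" "lam1 \<le> 1" "0 \<le> K1" "0 \<le> K2"
begin

lemma perturbation:
  "\<omega> \<in> S \<Longrightarrow> norm (j (cocycle \<sigma> A n \<omega> x) - j (cocycle \<sigma> B n \<omega> x))
     \<le> K1 * K2 * (\<Sum>i<n. norm (cocycle \<sigma> B i \<omega> x))"
  using maps_to linear_A linear_j intertwines A'_bounded close nonneg(6)
  by (rule cocycle_perturbation_bound)

lemma uniform_bound:
  assumes "\<omega> \<in> S"
  shows "norm (cocycle \<sigma> A n \<omega> x) \<le> 2 * C * norm x"
proof -
  have "C * lam1 ^ n * norm x \<le> C * 1 * norm x"
    using nonneg by (intro mult_right_mono mult_left_mono power_le_one) auto
  moreover have "C * norm (j x) \<le> C * norm x"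
    using norm_j_le nonneg(1) by (rule mult_left_mono)
  ultimately show ?thesis
    using lasota_yorke[OF assms, of n x] by linarith
qed

lemma B_bounded:
  assumes "\<omega> \<in> S" "P x"
  shows "norm (cocycle \<sigma> B n \<omega> x) \<le> D * norm x"
proof -
  have "D * exp (- lam * n) * norm x \<le> D * 1 * norm x"
    using nonneg by (intro mult_right_mono mult_left_mono) auto
  then show ?thesis
    using B_decay[OF assms, of n] by simp
qed

lemma contraction:
  assumes transient: "2 * C\<^sup>2 * lam1 ^ N + C * D * exp (- lam * N) \<le> 1/4"
    and small: "C * K1 * K2 * N * D \<le> 1/4"
    and "\<omega> \<in> S" "P x"
  shows "norm (cocycle \<sigma> A (2 * N) \<omega> x) \<le> norm x / 2"
proof -
  let ?y = "cocycle \<sigma> A N \<omega> x" and ?z = "cocycle \<sigma> B N \<omega> x"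
  have "(\<Sum>i<N. norm (cocycle \<sigma> B i \<omega> x)) \<le> N * (D * norm x)"
    using B_bounded[OF \<open>\<omega> \<in> S\<close> \<open>P x\<close>] by (intro sum_bounded_above[of "{..<N}", simplified])
  then have "norm (j ?y - j ?z) \<le> K1 * K2 * (N * (D * norm x))"
    using perturbation[OF \<open>\<omega> \<in> S\<close>, of N x] nonneg
    by (meson mult_left_mono order_trans zero_le_mult_iff)
  moreover have "norm (j ?z) \<le> D * exp (- lam * N) * norm x"
    using norm_j_le B_decay[OF \<open>\<omega> \<in> S\<close> \<open>P x\<close>] by (rule order_trans)
  ultimately have jy: "norm (j ?y) \<le> D * exp (- lam * N) * norm x + K1 * K2 * (N * (D * norm x))"
    using norm_triangle_sub[of "j ?y" "j ?z"] by linarith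
  have "(\<sigma> ^^ N) \<omega> \<in> S"
    using maps_to \<open>\<omega> \<in> S\<close> by (rule funpow_in_invariant)
  then have "norm (cocycle \<sigma> A (2 * N) \<omega> x) \<le> C * lam1 ^ N * norm ?y + C * norm (j ?y)"
    using lasota_yorke cocycle_add[of \<sigma> A N N \<omega>] by (simp add: mult_2)
  also have "\<dots> \<le> C * lam1 ^ N * (2 * C * norm x)
      + C * (D * exp (- lam * N) * norm x + K1 * K2 * (N * (D * norm x)))"
    using uniform_bound[OF \<open>\<omega> \<in> S\<close>] jy nonneg by (intro add_mono mult_left_mono) auto
  also have "\<dots> = (2 * C\<^sup>2 * lam1 ^ N + C * D * exp (- lam * N)) * norm x
      + (C * K1 * K2 * N * D) * norm x"
    by (simp add: algebra_simps power2_eq_square)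
  also have "\<dots> \<le> 1/4 * norm x + 1/4 * norm x"
    using transient small by (intro add_mono mult_right_mono) auto
  finally show ?thesis
    by simp
qed

lemma exp_decay:
  assumes "N \<ge> 1"
    and "2 * C\<^sup>2 * lam1 ^ N + C * D * exp (- lam * N) \<le> 1/4"
    and "C * K1 * K2 * N * D \<le> 1/4"
    and "\<omega> \<in> S" "P x"
  shows "norm (cocycle \<sigma> A n \<omega> x) \<le> 4 * C * exp (- (ln 2 / (2 * N)) * n) * norm x"
proof -
  have "norm (cocycle \<sigma> A n \<omega> x) \<le> 2 * (2 * C) * exp (- (ln 2 / real (2 * N)) * n) * norm x"
    using maps_to P_invariant uniform_bound contraction[OF assms(2,3)]
    by (rule cocycle_exp_decay_of_halving) (use assms nonneg in auto)
  then show ?thesis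
    by simp
qed

end

theorem lemma3p6:
  fixes M :: "'o measure" and \<sigma> :: "'o \<Rightarrow> 'o"
    and incl_s :: "'s::banach \<Rightarrow> 'w::banach"
    and incl_ss :: "'ss::banach \<Rightarrow> 's"
    and \<psi> :: "'s \<Rightarrow> real" and \<psi>w :: "'w \<Rightarrow> real"
    and I :: "real set"
    and Lw :: "'o \<Rightarrow> real \<Rightarrow> 'w \<Rightarrow> 'w"
    and Ls :: "'o \<Rightarrow> real \<Rightarrow> 's \<Rightarrow> 's"
    and Lss :: "'o \<Rightarrow> real \<Rightarrow> 'ss \<Rightarrow> 'ss"
    and \<Omega>' :: "'o set"
    and C D lam lam1 :: real
  assumes M: "prob_space M"
    and sigma: "invertible_mp_ergodic M \<sigma>"
    \<comment> \<open>continuous inclusions B_ss \<subseteq> B_s \<subseteq> B_w with norm inequalities\<close>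
    and incl_s: "bounded_linear incl_s" "inj incl_s" "\<And>h. norm (incl_s h) \<le> norm h"
    and incl_ss: "bounded_linear incl_ss" "inj incl_ss" "\<And>h. norm (incl_ss h) \<le> norm h"
    \<comment> \<open>psi: nonzero bounded functional on B_s with bounded extension to B_w\<close>
    and psi: "bounded_linear \<psi>" "\<psi> \<noteq> (\<lambda>_. 0)"
    and psiw: "bounded_linear \<psi>w" "\<And>h. \<psi>w (incl_s h) = \<psi> h"
    \<comment> \<open>the parameter interval\<close>
    and I: "is_interval I" "0 \<in> I"
    \<comment> \<open>the operators act boundedly on all three spaces, compatibly with the inclusions\<close>
    and Lbl: "\<And>\<omega> \<epsilon>. \<omega> \<in> space M \<Longrightarrow> \<epsilon> \<in> I \<Longrightarrow>
        bounded_linear (Lw \<omega> \<epsilon>) \<and> bounded_linear (Ls \<omega> \<epsilon>) \<and> bounded_linear (Lss \<omega> \<epsilon>)"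
    and Lcompat_s: "\<And>\<omega> \<epsilon> h. \<omega> \<in> space M \<Longrightarrow> \<epsilon> \<in> I \<Longrightarrow> incl_s (Ls \<omega> \<epsilon> h) = Lw \<omega> \<epsilon> (incl_s h)"
    and Lcompat_ss: "\<And>\<omega> \<epsilon> h. \<omega> \<in> space M \<Longrightarrow> \<epsilon> \<in> I \<Longrightarrow> incl_ss (Lss \<omega> \<epsilon> h) = Ls \<omega> \<epsilon> (incl_ss h)"
    \<comment> \<open>measurability\<close>
    and meas_s: "\<And>\<epsilon> h. \<epsilon> \<in> I \<Longrightarrow> (\<lambda>\<omega>. Ls \<omega> \<epsilon> h) \<in> borel_measurable M"
    and meas_ss: "\<And>\<epsilon> h. \<epsilon> \<in> I \<Longrightarrow> (\<lambda>\<omega>. Lss \<omega> \<epsilon> h) \<in> borel_measurable M"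
    \<comment> \<open>constants\<close>
    and constants: "C > 0" "D > 0" "lam > 0" "0 < lam1" "lam1 < 1"
    \<comment> \<open>the full-measure invariant set\<close>
    and Om: "\<Omega>' \<in> sets M" "measure M \<Omega>' = 1" "\<And>\<omega>. \<omega> \<in> space M \<Longrightarrow> \<sigma> \<omega> \<in> \<Omega>' \<longleftrightarrow> \<omega> \<in> \<Omega>'"
    \<comment> \<open>exponential decay of the unperturbed cocycle\<close>
    and dec_s: "\<And>\<omega> n h. \<omega> \<in> \<Omega>' \<Longrightarrow> \<psi> h = 0 \<Longrightarrow>
        norm (cocycle \<sigma> (\<lambda>\<omega>. Ls \<omega> 0) n \<omega> h) \<le> D * exp (- lam * real n) * norm h"
    and dec_ss: "\<And>\<omega> n h. \<omega> \<in> \<Omega>' \<Longrightarrow> \<psi> (incl_ss h) = 0 \<Longrightarrow>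
        norm (cocycle \<sigma> (\<lambda>\<omega>. Lss \<omega> 0) n \<omega> h) \<le> D * exp (- lam * real n) * norm h"
    \<comment> \<open>Lasota-Yorke inequalities\<close>
    and LY_s: "\<And>\<epsilon> \<omega> n h. \<epsilon> \<in> I \<Longrightarrow> \<omega> \<in> \<Omega>' \<Longrightarrow>
        norm (cocycle \<sigma> (\<lambda>\<omega>. Ls \<omega> \<epsilon>) n \<omega> h) \<le> C * lam1 ^ n * norm h + C * norm (incl_s h)"
    and LY_ss: "\<And>\<epsilon> \<omega> n h. \<epsilon> \<in> I \<Longrightarrow> \<omega> \<in> \<Omega>' \<Longrightarrow>
        norm (cocycle \<sigma> (\<lambda>\<omega>. Lss \<omega> \<epsilon>) n \<omega> h) \<le> C * lam1 ^ n * norm h + C * norm (incl_ss h)"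
    \<comment> \<open>closeness of the perturbed operators\<close>
    and close_w: "\<And>\<epsilon> \<omega> h. \<epsilon> \<in> I \<Longrightarrow> \<omega> \<in> \<Omega>' \<Longrightarrow>
        norm (Lw \<omega> \<epsilon> (incl_s h) - Lw \<omega> 0 (incl_s h)) \<le> C * \<bar>\<epsilon>\<bar> * norm h"
    and close_s: "\<And>\<epsilon> \<omega> h. \<epsilon> \<in> I \<Longrightarrow> \<omega> \<in> \<Omega>' \<Longrightarrow>
        norm (Ls \<omega> \<epsilon> (incl_ss h) - Ls \<omega> 0 (incl_ss h)) \<le> C * \<bar>\<epsilon>\<bar> * norm h"
    \<comment> \<open>uniform weak-norm bound\<close>
    and bound_w: "\<And>\<epsilon> \<omega> n h. \<epsilon> \<in> I \<Longrightarrow> \<omega> \<in> \<Omega>' \<Longrightarrow>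
        norm (cocycle \<sigma> (\<lambda>\<omega>. Lw \<omega> \<epsilon>) n \<omega> h) \<le> C * norm h"
    \<comment> \<open>psi is preserved\<close>
    and psi_pres: "\<And>\<epsilon> \<omega> h. \<epsilon> \<in> I \<Longrightarrow> \<omega> \<in> \<Omega>' \<Longrightarrow> \<psi> (Ls \<omega> \<epsilon> h) = \<psi> h"
  shows "\<exists>\<epsilon>\<^sub>0 > 0. \<exists>D' > 0. \<exists>lam' > 0. \<forall>\<epsilon>\<in>I. \<bar>\<epsilon>\<bar> \<le> \<epsilon>\<^sub>0 \<longrightarrow> (\<forall>\<omega>\<in>\<Omega>'. \<forall>n::nat.
      (\<forall>h. \<psi> (incl_ss h) = 0 \<longrightarrow>
         norm (cocycle \<sigma> (\<lambda>\<omega>. Lss \<omega> \<epsilon>) n \<omega> h) \<le> D' * exp (- lam' * real n) * norm h) \<and>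
      (\<forall>h. \<psi> h = 0 \<longrightarrow>
         norm (cocycle \<sigma> (\<lambda>\<omega>. Ls \<omega> \<epsilon>) n \<omega> h) \<le> D' * exp (- lam' * real n) * norm h))"
proof -
  have "\<Omega>' \<subseteq> space M"
    using Om(1) by (rule sets.sets_into_space)
  then have maps_to: "\<sigma> ` \<Omega>' \<subseteq> \<Omega>'"
    using Om(3) by (auto simp: subset_iff)
  have "\<forall>\<^sub>F N in sequentially. 1 \<le> N \<and> 2 * C\<^sup>2 * lam1 ^ N + C * D * exp (- lam * N) < 1/4"
    using constants by (intro eventually_conj eventually_ge_at_top eventually_geometric_plus_exp_less) auto
  then obtain N where "N \<ge> 1" and transient: "2 * C\<^sup>2 * lam1 ^ N + C * D * exp (- lam * N) < 1/4"
    using eventually_happens'[OF sequentially_bot] by blast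
  define \<epsilon>\<^sub>0 where "\<epsilon>\<^sub>0 = 1 / (8 * C ^ 3 * N * D)"
  define lam' where "lam' = ln 2 / (2 * N)"
  have decay: "(\<forall>h. \<psi> (incl_ss h) = 0 \<longrightarrow>
         norm (cocycle \<sigma> (\<lambda>\<omega>. Lss \<omega> \<epsilon>) n \<omega> h) \<le> 4 * C * exp (- lam' * real n) * norm h) \<and>
      (\<forall>h. \<psi> h = 0 \<longrightarrow>
         norm (cocycle \<sigma> (\<lambda>\<omega>. Ls \<omega> \<epsilon>) n \<omega> h) \<le> 4 * C * exp (- lam' * real n) * norm h)"
    if "\<epsilon> \<in> I" "\<bar>\<epsilon>\<bar> \<le> \<epsilon>\<^sub>0" "\<omega> \<in> \<Omega>'" for \<epsilon> \<omega> n
  proof -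
    have in_space: "\<omega> \<in> space M" if "\<omega> \<in> \<Omega>'" for \<omega>
      using that \<open>\<Omega>' \<subseteq> space M\<close> by blast
    have linear: "linear (Ls \<omega> \<epsilon>)" "linear (Lss \<omega> \<epsilon>)" if "\<omega> \<in> \<Omega>'" for \<omega>
      using Lbl[OF in_space[OF that] \<open>\<epsilon> \<in> I\<close>] bounded_linear.linear by blast+
    interpret s: perturbed_cocycle \<sigma> \<Omega>' "\<lambda>h. \<psi> h = 0" incl_s "\<lambda>\<omega>. Ls \<omega> \<epsilon>" "\<lambda>\<omega>. Ls \<omega> 0"
      "\<lambda>\<omega>. Lw \<omega> \<epsilon>" C D lam lam1 C "C * \<bar>\<epsilon>\<bar>"
      by (rule perturbed_cocycle.intro)
        (simp_all add: maps_to linear bounded_linear.linear incl_s Lcompat_s[OF in_space] I(2)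
          \<open>\<epsilon> \<in> I\<close> bound_w close_w psi_pres LY_s dec_s[simplified] constants[THEN less_imp_le])
    interpret ss: perturbed_cocycle \<sigma> \<Omega>' "\<lambda>h. \<psi> (incl_ss h) = 0" incl_ss "\<lambda>\<omega>. Lss \<omega> \<epsilon>"
      "\<lambda>\<omega>. Lss \<omega> 0" "\<lambda>\<omega>. Ls \<omega> \<epsilon>" C D lam lam1 "2 * C" "C * \<bar>\<epsilon>\<bar>"
      by (rule perturbed_cocycle.intro)
        (simp_all add: maps_to linear bounded_linear.linear incl_ss Lcompat_ss[OF in_space] I(2)
          \<open>\<epsilon> \<in> I\<close> s.uniform_bound close_s psi_pres LY_ss dec_ss[simplified] constants[THEN less_imp_le])
    have "C ^ 3 * N * D * \<bar>\<epsilon>\<bar> \<le> 1/8"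
      using \<open>\<bar>\<epsilon>\<bar> \<le> \<epsilon>\<^sub>0\<close> constants \<open>N \<ge> 1\<close> by (simp add: \<epsilon>\<^sub>0_def field_simps)
    then have "C * C * (C * \<bar>\<epsilon>\<bar>) * N * D \<le> 1/4" "C * (2 * C) * (C * \<bar>\<epsilon>\<bar>) * N * D \<le> 1/4"
      by (simp_all add: power3_eq_cube algebra_simps)
    then show ?thesis
      using s.exp_decay ss.exp_decay \<open>N \<ge> 1\<close> less_imp_le[OF transient] \<open>\<omega> \<in> \<Omega>'\<close>
      by (simp add: lam'_def)
  qed
  moreover have "\<epsilon>\<^sub>0 > 0" "4 * C > 0" "lam' > 0"
    using constants \<open>N \<ge> 1\<close> by (simp_all add: \<epsilon>\<^sub>0_def lam'_def)
  ultimately show ?thesis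
    by blast
qed

end
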